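(* Let $a,b\in\mathbb{Q}_3$ with $\gamma(a)=3$, $\gamma(b)=0$ and $(b_0,b_1)=(1,0)$ or $(2,2)$. Then $x=\sum_{k\ge0}x_k3^k\in\mathbb{Z}_3^*$ is a solution of $x^3+ax=b$ if and only if the congruences $$x_0^3\equiv b_0\pmod3,\qquad x_0^3\equiv b_0+3b_1\pmod9,$$ $$x_0^2x_1+M_1(x_0)\equiv b_2\pmod3,$$ $$x_0^2x_2+P_3^2(x_0,x_1)+x_0a_0+x_0x_1^2+M_2(x_0,x_1)\equiv b_3\pmod3,$$ $$x_0^2x_{k-1}+P_k^{k-1}(x_0,\dots,x_{k-2})+2x_0x_1x_{k-2}+x_{k-3}a_0+x_{k-4}a_1+\dots+x_0a_{k-3}+M_{k-1}(x_0,\dots,x_{k-2})\equiv b_k\pmod3,\quad k\ge4,$$ are fulfilled, where the integers $M_k(x_0,\dots,x_{k-1})$ are defined by $$x_0^3=b_0+3b_1+9M_1(x_0),$$ $$x_0^2x_1=b_2-M_1(x_0)+3M_2(x_0,x_1),$$ $$x_0^2x_2+P_3^2(x_0,x_1)+x_0a_0+x_0x_1^2=b_3-M_2(x_0,x_1)+3M_3(x_0,x_1,x_2),$$ $$x_0^2x_{k-1}+P_k^{k-1}(x_0,\dots,x_{k-2})+2x_0x_1x_{k-2}+x_{k-3}a_0+\dots+x_0a_{k-3}=b_k-M_{k-1}(x_0,\dots,x_{k-2})+3M_k(x_0,\dots,x_{k-1}),\quad k\ge4.$$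
   Context: Write $a=3^{\gamma(a)}(a_0+a_13+a_23^2+\dots)$, $b=3^{\gamma(b)}(b_0+b_13+b_23^2+\dots)$ in canonical form, with digits $a_j,b_j\in\{0,1,2\}$, $a_0,b_0\ne0$, $\gamma(a),\gamma(b)\in\mathbb{Z}$. $\mathbb{Z}_3^*$ is the set of $3$-adic units; $x\in\mathbb{Z}_3^*$ is written $x=x_0+x_13+x_23^2+\dots$ with $x_j\in\{0,1,2\}$, $x_0\ne0$. For $j\le k$, $P_k^j(x_0,\dots,x_{j-1})=\sum\frac{6}{m_0!\cdots m_{j-1}!}x_0^{m_0}\cdots x_{j-1}^{m_{j-1}}$, the sum over nonnegative integers $m_0,\dots,m_{j-1}$ with $\sum_{i=0}^{j-1}m_i=3$ and $\sum_{i=1}^{j-1}im_i=k$. *)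

theory Defs
  imports Main "HOL-Number_Theory.Cong"
begin

text \<open>3-adic numbers are represented by their digit sequences d :: nat => int,
  d j in {0,1,2}; the number is sum_j d j * 3^j (times 3^gamma).\<close>

definition digits3 :: "(nat \<Rightarrow> int) \<Rightarrow> bool" where
  "digits3 d \<longleftrightarrow> (\<forall>j. d j \<in> {0, 1, 2})"

definition trunc3 :: "(nat \<Rightarrow> int) \<Rightarrow> nat \<Rightarrow> int" where
  "trunc3 d n = (\<Sum>j<n. d j * 3 ^ j)"

text \<open>x^3 + a x = b in Z_3, where x = sum x_j 3^j, a = 3^3 * sum a_j 3^j, b = sum b_j 3^j.
  Equality in Z_3 = inverse limit of Z/3^n: equality modulo 3^n for every n.\<close>
definition solves3 :: "(nat \<Rightarrow> int) \<Rightarrow> (nat \<Rightarrow> int) \<Rightarrow> (nat \<Rightarrow> int) \<Rightarrow> bool" where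
  "solves3 x a b \<longleftrightarrow>
     (\<forall>n. [trunc3 x n ^ 3 + 27 * trunc3 a n * trunc3 x n = trunc3 b n] (mod 3 ^ n))"

definition Pkj :: "nat \<Rightarrow> nat \<Rightarrow> (nat \<Rightarrow> int) \<Rightarrow> int" where
  "Pkj k j x = (\<Sum>m\<in>{m :: nat \<Rightarrow> nat. (\<forall>i. j \<le> i \<longrightarrow> m i = 0) \<and>
                         (\<Sum>i<j. m i) = 3 \<and> (\<Sum>i<j. i * m i) = k}.
       int (6 div (\<Prod>i<j. fact (m i))) * (\<Prod>i<j. x i ^ m i))"

text \<open>Left-hand side (without the carry M) of the level-k relation, k >= 2.\<close>
definition lev :: "(nat \<Rightarrow> int) \<Rightarrow> (nat \<Rightarrow> int) \<Rightarrow> nat \<Rightarrow> int" where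
  "lev x a k =
    (if k = 2 then x 0 ^ 2 * x 1
     else if k = 3 then x 0 ^ 2 * x 2 + Pkj 3 2 x + x 0 * a 0 + x 0 * x 1 ^ 2
     else x 0 ^ 2 * x (k - 1) + Pkj k (k - 1) x + 2 * x 0 * x 1 * x (k - 2)
          + (\<Sum>i\<le>k - 3. x (k - 3 - i) * a i))"

text \<open>The carries M_k, defined by
  x_0^3 = b_0 + 3 b_1 + 9 M_1 and lev k = b_k - M_{k-1} + 3 M_k (k >= 2).
  Integer division is exact whenever the preceding congruences hold; if one fails,
  the conjunction of congruences is false anyway.\<close>
fun Mcarry :: "(nat \<Rightarrow> int) \<Rightarrow> (nat \<Rightarrow> int) \<Rightarrow> (nat \<Rightarrow> int) \<Rightarrow> nat \<Rightarrow> int" where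
  "Mcarry x a b 0 = 0"
| "Mcarry x a b (Suc 0) = (x 0 ^ 3 - b 0 - 3 * b 1) div 9"
| "Mcarry x a b (Suc (Suc n)) =
     (lev x a (Suc (Suc n)) + Mcarry x a b (Suc n) - b (Suc (Suc n))) div 3"

end

theory Submission
  imports Defs "HOL-Combinatorics.Multiset_Permutations"
begin

text \<open>
  Modulo 3^n, the coefficient of 3^k in x^3 + a x (where a carries the factor 3^3) is the sum
  of x_p x_q x_r over the ordered triples with p + q + r = k, plus the sum of x_(k-3-i) a_i.
  Counting the orderings of each multiset of indices identifies the triples with all indices
  below k - 1 with P_k^(k-1); the remaining triples contribute 3 x_0^2 x_k + 6 x_0 x_1 x_(k-1),
  a multiple of 3 that is moved up to position k + 1. After this regrouping the digit at
  position k is the left-hand side of the paper's level-k congruence. Finally, 3^n divides the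
  sum of d_k 3^k over k < n for every n iff every d_k plus its incoming carry is divisible by 3,
  and these carries are the M_k.
\<close>

section \<open>Ordered triples and the polynomials P\<close>

lemma sum_mset_image_eq_sum_count:
  fixes f :: "'a \<Rightarrow> 'b::comm_semiring_1"
  assumes "finite A" "set_mset M \<subseteq> A"
  shows "(\<Sum>i\<in>#M. f i) = (\<Sum>i\<in>A. of_nat (count M i) * f i)"
  using assms(2)
proof (induction M)
  case empty
  then show ?case by simp
next
  case (add y M)
  have "(\<Sum>i\<in>A. of_nat (count (add_mset y M) i) * f i)
      = (\<Sum>i\<in>A. of_nat (count M i) * f i + (if i = y then f y else 0))"
    by (rule sum.cong) (auto simp: algebra_simps)
  also have "\<dots> = (\<Sum>i\<in>A. of_nat (count M i) * f i) + f y"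
    using add.prems assms(1) by (simp add: sum.distrib)
  finally show ?case
    using add by (simp add: add.commute)
qed

lemma prod_mset_image_eq_prod_count:
  assumes "finite A" "set_mset M \<subseteq> A"
  shows "(\<Prod>i\<in>#M. f i) = (\<Prod>i\<in>A. f i ^ count M i)"
  unfolding image_prod_mset_multiplicity
  by (rule prod.mono_neutral_left) (use assms in \<open>auto simp: not_in_iff\<close>)

definition bounded_lists :: "nat \<Rightarrow> nat \<Rightarrow> nat \<Rightarrow> nat list set" where
  "bounded_lists N k j = {xs. length xs = N \<and> set xs \<subseteq> {..<j} \<and> sum_list xs = k}"

definition bounded_msets :: "nat \<Rightarrow> nat \<Rightarrow> nat \<Rightarrow> nat multiset set" where
  "bounded_msets N k j = {M. size M = N \<and> set_mset M \<subseteq> {..<j} \<and> sum_mset M = k}"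

lemma finite_bounded_lists: "finite (bounded_lists N k j)"
  by (rule finite_subset[of _ "{xs. set xs \<subseteq> {..<j} \<and> length xs = N}"])
     (auto simp: bounded_lists_def intro: finite_lists_length_eq)

lemma mset_bounded_lists: "mset ` bounded_lists N k j = bounded_msets N k j"
proof
  show "mset ` bounded_lists N k j \<subseteq> bounded_msets N k j"
    by (auto simp: bounded_lists_def bounded_msets_def sum_mset_sum_list)
  show "bounded_msets N k j \<subseteq> mset ` bounded_lists N k j"
  proof
    fix M assume "M \<in> bounded_msets N k j"
    moreover obtain xs where "mset xs = M"
      using ex_mset by blast
    ultimately show "M \<in> mset ` bounded_lists N k j"
      by (force simp: bounded_lists_def bounded_msets_def sum_mset_sum_list)
  qed
qed

lemma sum_bounded_lists_eq_sum_bounded_msets: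
  "(\<Sum>xs\<in>bounded_lists N k j. prod_list (map x xs))
     = (\<Sum>M\<in>bounded_msets N k j. of_nat (card (permutations_of_multiset M)) * (\<Prod>i\<in>#M. x i))"
proof -
  have fibre: "{xs \<in> bounded_lists N k j. mset xs = M} = permutations_of_multiset M"
    if "M \<in> bounded_msets N k j" for M
    using that
    by (auto simp: bounded_lists_def bounded_msets_def permutations_of_multiset_def sum_mset_sum_list)
  have "(\<Sum>xs\<in>bounded_lists N k j. prod_list (map x xs))
      = (\<Sum>M\<in>bounded_msets N k j.
          \<Sum>xs\<in>{xs \<in> bounded_lists N k j. mset xs = M}. prod_list (map x xs))"
    unfolding mset_bounded_lists[symmetric] by (rule sum.image_gen[OF finite_bounded_lists])
  also have "\<dots> = (\<Sum>M\<in>bounded_msets N k j. \<Sum>xs\<in>permutations_of_multiset M. \<Prod>i\<in>#M. x i)"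
    by (intro sum.cong refl)
       (auto simp: fibre permutations_of_multiset_def prod_mset_prod_list[symmetric])
  finally show ?thesis
    by simp
qed

lemma count_bounded_msets:
  "count ` bounded_msets N k j
     = {m. (\<forall>i. j \<le> i \<longrightarrow> m i = 0) \<and> (\<Sum>i<j. m i) = N \<and> (\<Sum>i<j. i * m i) = k}"
    (is "_ = ?F")
proof -
  have sums: "size M = (\<Sum>i<j. count M i)" "sum_mset M = (\<Sum>i<j. i * count M i)"
    if "set_mset M \<subseteq> {..<j}" for M :: "nat multiset"
    using sum_mset_image_eq_sum_count[OF _ that, of "\<lambda>_. 1::nat"]
      sum_mset_image_eq_sum_count[OF _ that, of "\<lambda>i. i"]
    by (simp_all add: mult.commute)
  show ?thesis
  proof (intro set_eqI iffI)
    fix m assume "m \<in> count ` bounded_msets N k j"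
    then obtain M where M: "M \<in> bounded_msets N k j" "m = count M"
      by blast
    then have sub: "set_mset M \<subseteq> {..<j}"
      by (simp add: bounded_msets_def)
    then have "\<forall>i. j \<le> i \<longrightarrow> m i = 0"
      using M(2) by (auto simp: count_eq_zero_iff)
    with M sums[OF sub] show "m \<in> ?F"
      by (simp add: bounded_msets_def)
  next
    fix m assume m: "m \<in> ?F"
    then have support: "0 < m i \<Longrightarrow> i < j" for i
      by (cases "i < j") auto
    have "finite {i. 0 < m i}"
      by (rule finite_subset[of _ "{..<j}"]) (auto intro: support)
    then have count_M: "count (Abs_multiset m) = m"
      by simp
    have sub: "set_mset (Abs_multiset m) \<subseteq> {..<j}"
      using support by (auto simp: count_M set_mset_def)
    have "Abs_multiset m \<in> bounded_msets N k j"
      using m sums[OF sub] sub by (simp add: bounded_msets_def count_M)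
    then show "m \<in> count ` bounded_msets N k j"
      using count_M by (metis image_eqI)
  qed
qed

lemma card_permutations_of_bounded_mset:
  assumes "M \<in> bounded_msets N k j"
  shows "card (permutations_of_multiset M) = fact N div (\<Prod>i<j. fact (count M i))"
proof -
  have "(\<Prod>i\<in>set_mset M. fact (count M i)) = (\<Prod>i<j. fact (count M i) :: nat)"
    by (rule prod.mono_neutral_left) (use assms in \<open>auto simp: bounded_msets_def not_in_iff\<close>)
  then show ?thesis
    using assms by (simp add: card_permutations_of_multiset bounded_msets_def)
qed

lemma Pkj_eq_sum_bounded_msets:
  "Pkj k j x
    = (\<Sum>M\<in>bounded_msets 3 k j. of_nat (card (permutations_of_multiset M)) * (\<Prod>i\<in>#M. x i))"
proof -
  have "inj_on count (bounded_msets 3 k j)"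
    by (auto simp: inj_on_def multiset_eq_iff)
  then have "Pkj k j x = (\<Sum>M\<in>bounded_msets 3 k j.
      int (6 div (\<Prod>i<j. fact (count M i))) * (\<Prod>i<j. x i ^ count M i))"
    unfolding Pkj_def count_bounded_msets[symmetric] by (simp add: sum.reindex)
  also have "\<dots>
      = (\<Sum>M\<in>bounded_msets 3 k j. of_nat (card (permutations_of_multiset M)) * (\<Prod>i\<in>#M. x i))"
  proof (intro sum.cong refl)
    fix M assume M: "M \<in> bounded_msets 3 k j"
    then have "(\<Prod>i\<in>#M. x i) = (\<Prod>i<j. x i ^ count M i)"
      by (simp add: prod_mset_image_eq_prod_count bounded_msets_def)
    with M show "int (6 div (\<Prod>i<j. fact (count M i))) * (\<Prod>i<j. x i ^ count M i)
        = of_nat (card (permutations_of_multiset M)) * (\<Prod>i\<in>#M. x i)"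
      by (simp add: card_permutations_of_bounded_mset fact_numeral)
  qed
  finally show ?thesis .
qed

definition bounded_triples :: "nat \<Rightarrow> nat \<Rightarrow> (nat \<times> nat \<times> nat) set" where
  "bounded_triples k j = {(p, q, r). p < j \<and> q < j \<and> r < j \<and> p + q + r = k}"

definition cube_coeff :: "(nat \<Rightarrow> int) \<Rightarrow> nat \<Rightarrow> nat \<Rightarrow> int" where
  "cube_coeff x k j = (\<Sum>(p, q, r)\<in>bounded_triples k j. x p * x q * x r)"

lemma finite_bounded_triples: "finite (bounded_triples k j)"
  by (rule finite_subset[of _ "{..<j} \<times> {..<j} \<times> {..<j}"]) (auto simp: bounded_triples_def)

lemma cube_coeff_eq_sum_bounded_lists:
  "cube_coeff x k j = (\<Sum>xs\<in>bounded_lists 3 k j. prod_list (map x xs))"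
proof -
  let ?list = "\<lambda>(p, q, r). [p, q, r]"
  have image: "bounded_lists 3 k j = ?list ` bounded_triples k j"
    by (auto simp: bounded_lists_def bounded_triples_def numeral_3_eq_3 length_Suc_conv image_iff)
  have "inj_on ?list (bounded_triples k j)"
    by (auto simp: inj_on_def)
  then show ?thesis
    unfolding image cube_coeff_def sum.reindex[OF \<open>inj_on ?list _\<close>]
    by (intro sum.cong refl) (auto simp: mult.assoc)
qed

lemma Pkj_eq_cube_coeff: "Pkj k j x = cube_coeff x k j"
  by (simp add: Pkj_eq_sum_bounded_msets cube_coeff_eq_sum_bounded_lists
      sum_bounded_lists_eq_sum_bounded_msets)

lemma bounded_triples_full_eq:
  assumes "k \<ge> 3"
  shows "bounded_triples k (k + 1) = bounded_triples k (k - 1) \<union>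
    {(k, 0, 0), (0, k, 0), (0, 0, k), (k - 1, 0, 1), (k - 1, 1, 0),
     (0, k - 1, 1), (1, k - 1, 0), (0, 1, k - 1), (1, 0, k - 1)}"
    (is "_ = _ \<union> ?extreme")
proof (intro set_eqI iffI)
  fix t assume "t \<in> bounded_triples k (k + 1)"
  then obtain p q r where t: "t = (p, q, r)" "p + q + r = k"
    by (auto simp: bounded_triples_def)
  show "t \<in> bounded_triples k (k - 1) \<union> ?extreme"
  proof (cases "p < k - 1 \<and> q < k - 1 \<and> r < k - 1")
    case True
    then show ?thesis
      using t by (simp add: bounded_triples_def)
  next
    case False
    have "(p, q, r) \<in> ?extreme"
      using False t(2) assms by simp presburger
    then show ?thesis
      unfolding t(1) by (rule UnI2)
  qed
next
  fix t assume "t \<in> bounded_triples k (k - 1) \<union> ?extreme"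
  then show "t \<in> bounded_triples k (k + 1)"
    using assms by (auto simp: bounded_triples_def)
qed

lemma cube_coeff_full_eq:
  assumes "k \<ge> 3"
  shows "cube_coeff x k (k + 1)
    = cube_coeff x k (k - 1) + 3 * x 0 ^ 2 * x k + 6 * x 0 * x 1 * x (k - 1)"
proof -
  let ?extreme = "{(k, 0, 0), (0, k, 0), (0, 0, k), (k - 1, 0, 1), (k - 1, 1, 0),
     (0, k - 1, 1), (1, k - 1, 0), (0, 1, k - 1), (1, 0, k - 1)}"
  have disjoint: "bounded_triples k (k - 1) \<inter> ?extreme = {}"
    using assms by (simp add: bounded_triples_def)
  have "cube_coeff x k (k + 1)
      = cube_coeff x k (k - 1) + (\<Sum>(p, q, r)\<in>?extreme. x p * x q * x r)"
    unfolding cube_coeff_def bounded_triples_full_eq[OF assms]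
    by (rule sum.union_disjoint[OF finite_bounded_triples _ disjoint]) simp
  also have "(\<Sum>(p, q, r)\<in>?extreme. x p * x q * x r)
      = 3 * x 0 ^ 2 * x k + 6 * x 0 * x 1 * x (k - 1)"
    using assms by (simp add: power2_eq_square algebra_simps)
  finally show ?thesis
    by (simp add: add.assoc)
qed

lemma cube_coeff_0: "cube_coeff x 0 1 = x 0 ^ 3"
proof -
  have "bounded_triples 0 1 = {(0, 0, 0)}"
    by (auto simp: bounded_triples_def)
  then show ?thesis
    by (simp add: cube_coeff_def power3_eq_cube)
qed

lemma cube_coeff_1: "cube_coeff x 1 2 = 3 * x 0 ^ 2 * x 1"
proof -
  have "bounded_triples 1 2 = {(1, 0, 0), (0, 1, 0), (0, 0, 1)}"
    unfolding bounded_triples_def set_eq_iff split_paired_all by simp presburger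
  then show ?thesis
    by (simp add: cube_coeff_def power2_eq_square)
qed

lemma cube_coeff_2: "cube_coeff x 2 3 = 3 * x 0 ^ 2 * x 2 + 3 * x 0 * x 1 ^ 2"
proof -
  have "bounded_triples 2 3 = {(2, 0, 0), (0, 2, 0), (0, 0, 2), (1, 1, 0), (1, 0, 1), (0, 1, 1)}"
    unfolding bounded_triples_def set_eq_iff split_paired_all by simp presburger
  then show ?thesis
    by (simp add: cube_coeff_def power2_eq_square algebra_simps)
qed

section \<open>Digits of the truncated equation\<close>

lemma sum_powers_cong_grouped:
  fixes c :: "'a \<Rightarrow> int" and w :: "'a \<Rightarrow> nat"
  assumes "finite S"
  shows "[(\<Sum>t\<in>S. c t * m ^ w t) = (\<Sum>k<n. (\<Sum>t\<in>{t\<in>S. w t = k}. c t) * m ^ k)] (mod m ^ n)"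
proof -
  have "(\<Sum>k<n. (\<Sum>t\<in>{t\<in>S. w t = k}. c t) * m ^ k)
      = (\<Sum>k<n. \<Sum>t\<in>S. if w t = k then c t * m ^ k else 0)"
    by (simp add: sum_distrib_right sum.inter_filter[OF assms]) (intro sum.cong refl; simp)
  also have "\<dots> = (\<Sum>t\<in>S. if w t < n then c t * m ^ w t else 0)"
    by (subst sum.swap) (simp add: if_distrib[of "\<lambda>u. u * _"] sum.delta' cong: if_cong)
  finally have grouped: "(\<Sum>k<n. (\<Sum>t\<in>{t\<in>S. w t = k}. c t) * m ^ k)
      = (\<Sum>t\<in>S. if w t < n then c t * m ^ w t else 0)" .
  have "[c t * m ^ w t = (if w t < n then c t * m ^ w t else 0)] (mod m ^ n)" for t
    by (auto simp: cong_0_iff le_imp_power_dvd)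
  then show ?thesis
    unfolding grouped by (rule cong_sum)
qed

lemma cube_digit_sum_cong:
  "[(\<Sum>k<n. x k * m ^ k) ^ 3 = (\<Sum>k<n. cube_coeff x k (k + 1) * m ^ k)] (mod m ^ n)"
proof -
  let ?S = "{..<n} \<times> {..<n} \<times> {..<n}"
  let ?f = "\<lambda>k. x k * m ^ k"
  have "(\<Sum>k<n. ?f k) * (\<Sum>k<n. ?f k) = (\<Sum>p<n. \<Sum>q<n. ?f p * ?f q)"
    by (rule sum_product)
  then have "(\<Sum>k<n. ?f k) ^ 3 = (\<Sum>p<n. \<Sum>q<n. ?f p * ?f q) * (\<Sum>r<n. ?f r)"
    by (simp add: power3_eq_cube)
  also have "\<dots> = (\<Sum>p<n. \<Sum>q<n. \<Sum>r<n. ?f p * ?f q * ?f r)"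
    unfolding sum_distrib_right by (simp only: sum_distrib_left)
  also have "\<dots> = (\<Sum>(p, q, r)\<in>?S. x p * x q * x r * m ^ (p + q + r))"
    by (simp add: sum.cartesian_product power_add mult_ac)
  finally have expand: "(\<Sum>k<n. x k * m ^ k) ^ 3
      = (\<Sum>t\<in>?S. (\<lambda>(p, q, r). x p * x q * x r) t * m ^ (\<lambda>(p, q, r). p + q + r) t)"
    by (simp add: case_prod_beta')
  have "{t\<in>?S. (\<lambda>(p, q, r). p + q + r) t = k} = bounded_triples k (k + 1)" if "k < n" for k
    using that by (auto simp: bounded_triples_def)
  then have grouped: "(\<Sum>k<n. (\<Sum>t\<in>{t\<in>?S. (\<lambda>(p, q, r). p + q + r) t = k}.
        (\<lambda>(p, q, r). x p * x q * x r) t) * m ^ k) = (\<Sum>k<n. cube_coeff x k (k + 1) * m ^ k)"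
    by (simp add: cube_coeff_def)
  show ?thesis
    using sum_powers_cong_grouped[where S = ?S and c = "\<lambda>(p, q, r). x p * x q * x r"
        and w = "\<lambda>(p, q, r). p + q + r" and m = m and n = n]
    unfolding expand grouped by simp
qed

definition ax_coeff :: "(nat \<Rightarrow> int) \<Rightarrow> (nat \<Rightarrow> int) \<Rightarrow> nat \<Rightarrow> int" where
  "ax_coeff x a k = (if 3 \<le> k then (\<Sum>i\<le>k - 3. x (k - 3 - i) * a i) else 0)"

lemma shifted_product_digit_sum_cong:
  "[m ^ 3 * (\<Sum>k<n. a k * m ^ k) * (\<Sum>k<n. x k * m ^ k)
    = (\<Sum>k<n. ax_coeff x a k * m ^ k)] (mod m ^ n)"
proof -
  let ?S = "{..<n} \<times> {..<n}"
  have product: "(\<Sum>k<n. a k * m ^ k) * (\<Sum>k<n. x k * m ^ k)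
      = (\<Sum>i<n. \<Sum>j<n. a i * m ^ i * (x j * m ^ j))"
    by (rule sum_product)
  have "m ^ 3 * (\<Sum>k<n. a k * m ^ k) * (\<Sum>k<n. x k * m ^ k)
      = m ^ 3 * (\<Sum>i<n. \<Sum>j<n. a i * m ^ i * (x j * m ^ j))"
    by (simp only: mult.assoc product)
  also have "\<dots> = (\<Sum>i<n. \<Sum>j<n. m ^ 3 * (a i * m ^ i * (x j * m ^ j)))"
    by (simp only: sum_distrib_left)
  also have "\<dots> = (\<Sum>(i, j)\<in>?S. a i * x j * m ^ (i + j + 3))"
    by (simp add: sum.cartesian_product power_add mult_ac)
  finally have expand: "m ^ 3 * (\<Sum>k<n. a k * m ^ k) * (\<Sum>k<n. x k * m ^ k)
      = (\<Sum>t\<in>?S. (\<lambda>(i, j). a i * x j) t * m ^ (\<lambda>(i, j). i + j + 3) t)"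
    by (simp add: case_prod_beta')
  have "(\<Sum>t\<in>{t\<in>?S. (\<lambda>(i, j). i + j + 3) t = k}. (\<lambda>(i, j). a i * x j) t) = ax_coeff x a k"
    if "k < n" for k
  proof (cases "3 \<le> k")
    case True
    have "{t\<in>?S. (\<lambda>(i, j). i + j + 3) t = k} = (\<lambda>i. (i, k - 3 - i)) ` {..k - 3}"
      using that True by (auto simp: image_iff)
    moreover have "inj_on (\<lambda>i. (i, k - 3 - i)) {..k - 3}"
      by (auto simp: inj_on_def)
    ultimately show ?thesis
      using True by (simp add: sum.reindex ax_coeff_def mult.commute)
  next
    case False
    then have empty: "{t\<in>?S. (\<lambda>(i, j). i + j + 3) t = k} = {}"
      by auto
    show ?thesis
      unfolding empty using False by (simp add: ax_coeff_def)
  qed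
  then have grouped: "(\<Sum>k<n. (\<Sum>t\<in>{t\<in>?S. (\<lambda>(i, j). i + j + 3) t = k}.
        (\<lambda>(i, j). a i * x j) t) * m ^ k) = (\<Sum>k<n. ax_coeff x a k * m ^ k)"
    by simp
  show ?thesis
    using sum_powers_cong_grouped[where S = ?S and c = "\<lambda>(i, j). a i * x j"
        and w = "\<lambda>(i, j). i + j + 3" and m = m and n = n]
    unfolding expand grouped by simp
qed

text \<open>deferred k is the part of the coefficient of 3^(k - 1) that the paper counts at level k,
  divided by 3. The whole coefficient of 3^1 is deferred, so level 1 is 0.\<close>

definition level :: "(nat \<Rightarrow> int) \<Rightarrow> (nat \<Rightarrow> int) \<Rightarrow> nat \<Rightarrow> int" where
  "level x a k = (if k = 0 then x 0 ^ 3 else if k = 1 then 0 else lev x a k)"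

definition deferred :: "(nat \<Rightarrow> int) \<Rightarrow> nat \<Rightarrow> int" where
  "deferred x k =
    (if k \<le> 1 then 0
     else if k = 2 then x 0 ^ 2 * x 1
     else if k = 3 then x 0 ^ 2 * x 2 + x 0 * x 1 ^ 2
     else x 0 ^ 2 * x (k - 1) + 2 * x 0 * x 1 * x (k - 2))"

lemma cube_coeff_plus_ax_coeff:
  "cube_coeff x k (k + 1) + ax_coeff x a k = level x a k + 3 * deferred x (Suc k) - deferred x k"
proof -
  consider "k = 0" | "k = 1" | "k = 2" | "k = 3" | "k \<ge> 4"
    by linarith
  then show ?thesis
  proof cases
    case 1
    show ?thesis
      unfolding 1 using cube_coeff_0[of x] by (simp add: ax_coeff_def level_def deferred_def)
  next
    case 2
    show ?thesis
      unfolding 2 using cube_coeff_1[of x]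
      by (simp add: numeral_2_eq_2 ax_coeff_def level_def deferred_def)
  next
    case 3
    show ?thesis
      unfolding 3 using cube_coeff_2[of x]
      by (simp add: ax_coeff_def level_def deferred_def lev_def)
  next
    case 4
    then show ?thesis
      using cube_coeff_full_eq[of 3 x]
      by (simp add: ax_coeff_def level_def deferred_def lev_def Pkj_eq_cube_coeff algebra_simps)
  next
    case 5
    then have "deferred x k = x 0 ^ 2 * x (k - 1) + 2 * x 0 * x 1 * x (k - 2)"
      and "deferred x (Suc k) = x 0 ^ 2 * x k + 2 * x 0 * x 1 * x (k - 1)"
      and "level x a k
        = x 0 ^ 2 * x (k - 1) + Pkj k (k - 1) x + 2 * x 0 * x 1 * x (k - 2) + ax_coeff x a k"
      by (simp_all add: deferred_def level_def lev_def ax_coeff_def)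
    then show ?thesis
      using 5 cube_coeff_full_eq[of k x] by (simp add: Pkj_eq_cube_coeff algebra_simps)
  qed
qed

lemma sum_telescope_powers:
  fixes m :: "'a::comm_ring_1"
  shows "(\<Sum>k<n. (L k + m * E (Suc k) - E k) * m ^ k)
    = (\<Sum>k<n. L k * m ^ k) + E n * m ^ n - E 0"
  by (induction n) (simp_all add: algebra_simps)

lemma deferred_0: "deferred x 0 = 0"
  by (simp add: deferred_def)

lemma truncated_equation_cong_level_sum:
  "[trunc3 x n ^ 3 + 27 * trunc3 a n * trunc3 x n = (\<Sum>k<n. level x a k * 3 ^ k)] (mod 3 ^ n)"
proof -
  have "[trunc3 x n ^ 3 + 27 * trunc3 a n * trunc3 x n
      = (\<Sum>k<n. (cube_coeff x k (k + 1) + ax_coeff x a k) * 3 ^ k)] (mod 3 ^ n)"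
    using cong_add[OF cube_digit_sum_cong shifted_product_digit_sum_cong, of x 3 n a x]
    by (simp add: trunc3_def sum.distrib distrib_right)
  also have "(\<Sum>k<n. (cube_coeff x k (k + 1) + ax_coeff x a k) * 3 ^ k)
      = (\<Sum>k<n. level x a k * 3 ^ k) + deferred x n * 3 ^ n"
    unfolding cube_coeff_plus_ax_coeff sum_telescope_powers deferred_0 by simp
  also have "[\<dots> = (\<Sum>k<n. level x a k * 3 ^ k)] (mod 3 ^ n)"
    by (simp add: cong_iff_dvd_diff)
  finally show ?thesis .
qed

lemma solves3_iff_dvd_level_sums:
  "solves3 x a b \<longleftrightarrow> (\<forall>n. (3::int) ^ n dvd (\<Sum>k<n. (level x a k - b k) * 3 ^ k))"
proof -
  have "[trunc3 x n ^ 3 + 27 * trunc3 a n * trunc3 x n = trunc3 b n] (mod 3 ^ n)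
      \<longleftrightarrow> 3 ^ n dvd (\<Sum>k<n. (level x a k - b k) * 3 ^ k)" for n
  proof -
    let ?L = "\<Sum>k<n. level x a k * 3 ^ k"
    note equation = truncated_equation_cong_level_sum[of x n a]
    have "(\<Sum>k<n. (level x a k - b k) * 3 ^ k) = ?L - trunc3 b n"
      by (simp add: trunc3_def sum_subtractf left_diff_distrib)
    moreover have "[trunc3 x n ^ 3 + 27 * trunc3 a n * trunc3 x n = trunc3 b n] (mod 3 ^ n)
        \<longleftrightarrow> [?L = trunc3 b n] (mod 3 ^ n)"
      using cong_trans[OF equation] cong_trans[OF cong_sym[OF equation]] by blast
    ultimately show ?thesis
      by (simp add: cong_iff_dvd_diff)
  qed
  then show ?thesis
    unfolding solves3_def by blast
qed

section \<open>Carries\<close>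

fun carry :: "int \<Rightarrow> (nat \<Rightarrow> int) \<Rightarrow> nat \<Rightarrow> int" where
  "carry m d 0 = 0"
| "carry m d (Suc k) = (d k + carry m d k) div m"

lemma digit_sum_eq_carry:
  assumes "\<forall>k<n. m dvd d k + carry m d k"
  shows "(\<Sum>k<n. d k * m ^ k) = carry m d n * m ^ n"
  using assms
proof (induction n)
  case 0
  then show ?case by simp
next
  case (Suc n)
  then have "(\<Sum>k<Suc n. d k * m ^ k) = (d n + carry m d n) * m ^ n"
    by (simp add: algebra_simps)
  also have "\<dots> = (d n + carry m d n) div m * m * m ^ n"
    using Suc.prems by simp
  also have "\<dots> = carry m d (Suc n) * m ^ Suc n"
    by (simp add: mult.assoc)
  finally show ?case .
qed

lemma all_powers_dvd_digit_sums_iff: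
  fixes m :: int
  assumes "m \<noteq> 0"
  shows "(\<forall>n. m ^ n dvd (\<Sum>k<n. d k * m ^ k)) \<longleftrightarrow> (\<forall>k. m dvd d k + carry m d k)"
proof
  assume all: "\<forall>n. m ^ n dvd (\<Sum>k<n. d k * m ^ k)"
  have "m dvd d k + carry m d k" for k
  proof (induction k rule: less_induct)
    case (less k)
    then have "(\<Sum>j<Suc k. d j * m ^ j) = (d k + carry m d k) * m ^ k"
      by (simp add: digit_sum_eq_carry algebra_simps)
    moreover have "m * m ^ k dvd (\<Sum>j<Suc k. d j * m ^ j)"
      using all by (metis power_Suc)
    ultimately show ?case
      using assms by (simp add: mult.commute[of _ "m ^ k"])
  qed
  then show "\<forall>k. m dvd d k + carry m d k" ..
next
  assume "\<forall>k. m dvd d k + carry m d k"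
  then show "\<forall>n. m ^ n dvd (\<Sum>k<n. d k * m ^ k)"
    by (simp add: digit_sum_eq_carry)
qed

lemma div_3_diff_div_3:
  fixes u v :: int
  shows "(u div 3 - v) div 3 = (u - 3 * v) div 9"
proof -
  have "u div 3 - v = (u + (- v) * 3) div 3"
    by simp
  then show ?thesis
    using zdiv_zmult2_eq[of 3 "u - 3 * v" 3] by (simp add: algebra_simps)
qed

lemma dvd_div_3_diff_iff:
  fixes u v :: int
  assumes "3 dvd u"
  shows "3 dvd u div 3 - v \<longleftrightarrow> 9 dvd u - 3 * v"
proof -
  obtain w where "u = 3 * w"
    using assms by blast
  then show ?thesis
    using dvd_mult_cancel_left[of 3 3 "w - v"] by (simp add: algebra_simps)
qed

text \<open>The paper's first carry M_1 merges the carries out of positions 0 and 1.\<close>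

lemma Mcarry_eq_carry:
  "Mcarry x a b (Suc k) = carry 3 (\<lambda>k. level x a k - b k) (Suc (Suc k))"
proof (induction k)
  case 0
  then show ?case
    by (simp add: level_def div_3_diff_div_3 algebra_simps)
next
  case (Suc k)
  then show ?case
    by (simp add: level_def algebra_simps)
qed

lemma all_ge_unfold: "(\<forall>k\<ge>n. P k) \<longleftrightarrow> P n \<and> (\<forall>k\<ge>Suc n. P k)"
  by (auto simp: Suc_le_eq) (metis le_neq_implies_less)

lemma all_nat_unfold_0_1:
  fixes P :: "nat \<Rightarrow> bool"
  shows "(\<forall>k. P k) \<longleftrightarrow> P 0 \<and> P 1 \<and> (\<forall>k\<ge>2. P k)"
  using all_ge_unfold[of 0 P] all_ge_unfold[of 1 P] by (simp add: numeral_2_eq_2)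

lemma all_ge_2_unfold:
  fixes P :: "nat \<Rightarrow> bool"
  shows "(\<forall>k\<ge>2. P k) \<longleftrightarrow> P 2 \<and> P 3 \<and> (\<forall>k\<ge>4. P k)"
  using all_ge_unfold[of 2 P] all_ge_unfold[of 3 P] by (simp add: eval_nat_numeral)

lemma carry_conditions_iff:
  "(\<forall>k. 3 dvd level x a k - b k + carry 3 (\<lambda>k. level x a k - b k) k) \<longleftrightarrow>
    [x 0 ^ 3 = b 0] (mod 3) \<and> [x 0 ^ 3 = b 0 + 3 * b 1] (mod 9) \<and>
    (\<forall>k\<ge>2. [lev x a k + Mcarry x a b (k - 1) = b k] (mod 3))"
proof -
  let ?d = "\<lambda>k. level x a k - b k"
  have level_0: "3 dvd ?d 0 + carry 3 ?d 0 \<longleftrightarrow> [x 0 ^ 3 = b 0] (mod 3)"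
    by (simp add: level_def cong_iff_dvd_diff)
  have level_1: "3 dvd ?d 1 + carry 3 ?d 1 \<longleftrightarrow> [x 0 ^ 3 = b 0 + 3 * b 1] (mod 9)"
    if "[x 0 ^ 3 = b 0] (mod 3)"
    using that dvd_div_3_diff_iff[of "x 0 ^ 3 - b 0" "b 1"]
    by (simp add: level_def cong_iff_dvd_diff algebra_simps)
  have level_Suc_Suc:
    "3 dvd ?d k + carry 3 ?d k \<longleftrightarrow> [lev x a k + Mcarry x a b (k - 1) = b k] (mod 3)"
    if "k \<ge> 2" for k
  proof -
    obtain j where "k = Suc (Suc j)"
      using \<open>k \<ge> 2\<close> by (metis add_2_eq_Suc le_Suc_ex)
    then show ?thesis
      by (simp add: Mcarry_eq_carry level_def cong_iff_dvd_diff algebra_simps)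
  qed
  show ?thesis
    unfolding all_nat_unfold_0_1[where P = "\<lambda>k. 3 dvd ?d k + carry 3 ?d k"]
    using level_0 level_1 level_Suc_Suc by blast
qed

theorem theorem3p5:
  fixes a b x :: "nat \<Rightarrow> int"
  assumes "digits3 a" and "a 0 \<noteq> 0"
    and "digits3 b" and "b 0 \<noteq> 0"
    and "(b 0, b 1) = (1, 0) \<or> (b 0, b 1) = (2, 2)"
    and "digits3 x" and "x 0 \<noteq> 0"
  shows "solves3 x a b \<longleftrightarrow>
    ([x 0 ^ 3 = b 0] (mod 3) \<and>
     [x 0 ^ 3 = b 0 + 3 * b 1] (mod 9) \<and>
     [x 0 ^ 2 * x 1 + Mcarry x a b 1 = b 2] (mod 3) \<and>
     [x 0 ^ 2 * x 2 + Pkj 3 2 x + x 0 * a 0 + x 0 * x 1 ^ 2 + Mcarry x a b 2 = b 3] (mod 3) \<and>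
     (\<forall>k\<ge>4. [x 0 ^ 2 * x (k - 1) + Pkj k (k - 1) x + 2 * x 0 * x 1 * x (k - 2)
               + (\<Sum>i\<le>k - 3. x (k - 3 - i) * a i) + Mcarry x a b (k - 1) = b k] (mod 3)))"
proof -
  have levels: "(\<forall>k\<ge>2. [lev x a k + Mcarry x a b (k - 1) = b k] (mod 3)) \<longleftrightarrow>
    [x 0 ^ 2 * x 1 + Mcarry x a b 1 = b 2] (mod 3) \<and>
    [x 0 ^ 2 * x 2 + Pkj 3 2 x + x 0 * a 0 + x 0 * x 1 ^ 2 + Mcarry x a b 2 = b 3] (mod 3) \<and>
    (\<forall>k\<ge>4. [x 0 ^ 2 * x (k - 1) + Pkj k (k - 1) x + 2 * x 0 * x 1 * x (k - 2)
              + (\<Sum>i\<le>k - 3. x (k - 3 - i) * a i) + Mcarry x a b (k - 1) = b k] (mod 3))"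
    unfolding all_ge_2_unfold[where P = "\<lambda>k. [lev x a k + Mcarry x a b (k - 1) = b k] (mod 3)"]
    by (auto simp: lev_def)
  have "solves3 x a b \<longleftrightarrow> (\<forall>k. 3 dvd level x a k - b k + carry 3 (\<lambda>k. level x a k - b k) k)"
    using all_powers_dvd_digit_sums_iff[of 3] by (simp add: solves3_iff_dvd_level_sums)
  then show ?thesis
    unfolding carry_conditions_iff levels .
qed

end
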